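(* Let $T$ be a parity decision tree on $\{-1,1\}^n$ of depth $d$. Then there is a refinement $T'$ of $T$ which is a correlation-free parity decision tree of depth at most $2d$.
   Context: A parity decision tree on $\{-1,1\}^n$ is a rooted full binary tree whose internal nodes are labelled by subsets $S\subseteq[n]$, whose two outgoing edges are labelled $-1$ and $1$; an input $x$ follows from a node labelled $S$ the edge labelled $\prod_{i\in S}x_i$. Depth is the maximum number of internal nodes on a root-to-leaf path. A refinement of $T$ is a parity decision tree obtained from $T$ by replacing leaves with (parity decision) subtrees. A quantity (such as $x_i$ or $x_i\oplus x_j$) is fixed by the queries on a path if it is determined by the answers to the parities queried along that path. A tree is (pairwise) correlation-free (also called uncorrelated) if for every $i\ne j\in[n]$ and every path in it, whenever $x_i\oplus x_j$ is fixed by the queries in the path, so are $x_i$ and $x_j$. *)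

theory Defs
  imports Main
begin

text \<open>Coordinates of the cube are indexed by 0..<n.
  A node \<open>Node S t_neg t_pos\<close> queries the parity \<open>\<Prod>i\<in>S. x i\<close>;
  inputs with answer -1 go to \<open>t_neg\<close>, inputs with answer 1 go to \<open>t_pos\<close>.\<close>

datatype pdt = Leaf | Node "nat set" pdt pdt

fun valid_pdt :: "nat \<Rightarrow> pdt \<Rightarrow> bool" where
  "valid_pdt n Leaf = True"
| "valid_pdt n (Node S l r) = (S \<subseteq> {..<n} \<and> valid_pdt n l \<and> valid_pdt n r)"

fun depth :: "pdt \<Rightarrow> nat" where
  "depth Leaf = 0"
| "depth (Node S l r) = Suc (max (depth l) (depth r))"

fun refines :: "pdt \<Rightarrow> pdt \<Rightarrow> bool" where
  "refines Leaf T' = True"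
| "refines (Node S l r) Leaf = False"
| "refines (Node S l r) (Node S' l' r') = (S' = S \<and> refines l l' \<and> refines r r')"

definition cube :: "nat \<Rightarrow> (nat \<Rightarrow> int) set" where
  "cube n = {x. (\<forall>i<n. x i = -1 \<or> x i = 1) \<and> (\<forall>i\<ge>n. x i = 1)}"

fun leaf_paths :: "pdt \<Rightarrow> (nat set \<times> int) list set" where
  "leaf_paths Leaf = {[]}"
| "leaf_paths (Node S l r) =
     ((#) (S, -1)) ` leaf_paths l \<union> ((#) (S, 1)) ` leaf_paths r"

definition consistent :: "nat \<Rightarrow> (nat set \<times> int) list \<Rightarrow> (nat \<Rightarrow> int) set" where
  "consistent n p = {x \<in> cube n. \<forall>(S, b) \<in> set p. (\<Prod>i\<in>S. x i) = b}"

definition fixed :: "nat \<Rightarrow> (nat set \<times> int) list \<Rightarrow> ((nat \<Rightarrow> int) \<Rightarrow> int) \<Rightarrow> bool" where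
  "fixed n p f = (\<forall>x\<in>consistent n p. \<forall>y\<in>consistent n p. f x = f y)"

text \<open>In \<plusminus>1 notation, x_i \<oplus> x_j corresponds to the product x_i * x_j.\<close>
definition correlation_free :: "nat \<Rightarrow> pdt \<Rightarrow> bool" where
  "correlation_free n T = (\<forall>p\<in>leaf_paths T. \<forall>i<n. \<forall>j<n. i \<noteq> j \<longrightarrow>
      fixed n p (\<lambda>x. x i * x j) \<longrightarrow> fixed n p (\<lambda>x. x i) \<and> fixed n p (\<lambda>x. x j))"

end

theory Submission
  imports Defs "HOL-Library.FuncSet"
begin

text \<open>For a path p let C be the set of inputs consistent with it and F the set of coordinates
  it fixes. All points of C agree on F, so the potential |C| * 2^|F| is at most 2^n, while a path
  of length l has |C| \<ge> 2^(n-l); hence every leaf of T has potential at least 2^(n-d). If x_i x_j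
  is fixed on a path but x_i is not, then querying x_i at most halves C but fixes the two new
  coordinates i and j, so the potential at least doubles. Therefore at most d further queries below
  every leaf of T make all paths correlation-free.\<close>

lemma cube_values: "x \<in> cube n \<Longrightarrow> x k = 1 \<or> x k = -1"
  by (cases "k < n") (auto simp: cube_def)

lemma cube_square: "x \<in> cube n \<Longrightarrow> x k * x k = 1"
  using cube_values[of x n k] by auto

lemma parity_values: "x \<in> cube n \<Longrightarrow> (\<Prod>i\<in>S. x i) = 1 \<or> (\<Prod>i\<in>S. x i) = -1"
proof (induction S rule: infinite_finite_induct)
  case (insert i S)
  then show ?case using cube_values[of x n i] by auto
qed simp_all

lemma cube_mult:
  assumes "x \<in> cube n" "y \<in> cube n" shows "(\<lambda>k. x k * y k) \<in> cube n"
proof -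
  have "x k * y k = 1 \<or> x k * y k = -1" for k
    using cube_values[OF assms(1), of k] cube_values[OF assms(2), of k] by auto
  then show ?thesis using assms by (auto simp: cube_def)
qed

lemma card_cube_agreeing:
  assumes a: "a \<in> cube n" and G: "G \<subseteq> {..<n}"
  shows "card {x \<in> cube n. \<forall>k\<in>G. x k = a k} = 2 ^ (n - card G)"
proof -
  define B where "B k = (if k \<in> G then {a k} else {-1, 1::int})" for k
  define pad where "pad y k = (if k < n then y k else 1)" for y :: "nat \<Rightarrow> int" and k
  have "{x \<in> cube n. \<forall>k\<in>G. x k = a k} = pad ` (PiE {..<n} B)"
  proof (intro equalityI subsetI)
    fix x assume x: "x \<in> {x \<in> cube n. \<forall>k\<in>G. x k = a k}"
    then have "x = pad (restrict x {..<n})" by (auto simp: pad_def cube_def fun_eq_iff restrict_def)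
    moreover have "restrict x {..<n} \<in> PiE {..<n} B"
      using x cube_values[of x n] by (auto simp: B_def insert_commute)
    ultimately show "x \<in> pad ` PiE {..<n} B" by blast
  next
    fix x assume "x \<in> pad ` PiE {..<n} B"
    then obtain y where y: "y \<in> PiE {..<n} B" "x = pad y" by blast
    have yB: "y k \<in> B k" if "k < n" for k
      using y(1) that by (simp add: PiE_mem)
    have "y k = 1 \<or> y k = -1" if "k < n" for k
      using yB[OF that] cube_values[OF a, of k] by (auto simp: B_def split: if_splits)
    moreover have "y k = a k" if "k \<in> G" for k
      using yB[of k] that G by (auto simp: B_def)
    ultimately show "x \<in> {x \<in> cube n. \<forall>k\<in>G. x k = a k}"
      using y(2) G by (auto simp: pad_def cube_def)
  qed
  moreover have "inj_on pad (PiE {..<n} B)"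
  proof (rule inj_onI)
    fix y z assume yz: "y \<in> PiE {..<n} B" "z \<in> PiE {..<n} B" "pad y = pad z"
    have "y k = z k" if "k < n" for k
      using fun_cong[OF yz(3), of k] that by (simp add: pad_def)
    then show "y = z" using yz(1,2) by (intro PiE_ext) auto
  qed
  moreover have "card (PiE {..<n} B) = 2 ^ (n - card G)"
  proof -
    have "card (PiE {..<n} B) = (\<Prod>k<n. card (B k))" by (simp add: card_PiE)
    also have "\<dots> = (\<Prod>k\<in>{..<n} - G. 2)"
      using G by (intro prod.mono_neutral_cong_right) (auto simp: B_def)
    also have "\<dots> = 2 ^ (n - card G)"
      using G by (simp add: card_Diff_subset finite_subset)
    finally show ?thesis .
  qed
  ultimately show ?thesis by (simp add: card_image)
qed

lemma card_cube: "card (cube n) = 2 ^ n"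
proof -
  have "(\<lambda>_. 1) \<in> cube n" by (simp add: cube_def)
  from card_cube_agreeing[OF this, of "{}"] show ?thesis by simp
qed

lemma finite_cube: "finite (cube n)"
  using card_cube by (metis card.infinite power_not_zero zero_neq_numeral)

lemma consistent_subset_cube: "consistent n p \<subseteq> cube n"
  by (auto simp: consistent_def)

lemma finite_consistent: "finite (consistent n p)"
  using finite_subset[OF consistent_subset_cube finite_cube] .

lemma consistent_Nil: "consistent n [] = cube n"
  by (simp add: consistent_def)

lemma consistent_snoc: "consistent n (p @ [(S, b)]) = {x \<in> consistent n p. (\<Prod>i\<in>S. x i) = b}"
  by (auto simp: consistent_def)

lemma consistent_mult3:
  assumes x: "x \<in> consistent n p" and a: "a \<in> consistent n p" and c: "c \<in> consistent n p"
  shows "(\<lambda>k. x k * a k * c k) \<in> consistent n p"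
proof -
  have cubes: "x \<in> cube n" "a \<in> cube n" "c \<in> cube n"
    using x a c consistent_subset_cube by auto
  have "(\<Prod>i\<in>T. x i * a i * c i) = \<beta>" if "(T, \<beta>) \<in> set p" for T \<beta>
  proof -
    have "(\<Prod>i\<in>T. x i) = \<beta>" "(\<Prod>i\<in>T. a i) = \<beta>" "(\<Prod>i\<in>T. c i) = \<beta>"
      using x a c that by (auto simp: consistent_def)
    then show ?thesis using parity_values[OF cubes(2), of T] by (auto simp: prod.distrib)
  qed
  moreover have "(\<lambda>k. x k * a k * c k) \<in> cube n"
    using cubes by (intro cube_mult)
  ultimately show ?thesis by (auto simp: consistent_def)
qed

lemma card_consistent_le_double:
  assumes "{x \<in> consistent n p. (\<Prod>i\<in>S. x i) = b} \<noteq> {}"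
  shows "card (consistent n p) \<le> 2 * card {x \<in> consistent n p. (\<Prod>i\<in>S. x i) = b}"
proof -
  let ?C = "consistent n p"
  let ?D = "{x \<in> ?C. (\<Prod>i\<in>S. x i) = b}"
  let ?E = "?C - ?D"
  have "card ?E \<le> card ?D"
  proof (cases "?E = {}")
    case False
    obtain a c where a: "a \<in> ?D" and c: "c \<in> ?E" using assms False by blast
    then have acube: "a \<in> cube n" and ccube: "c \<in> cube n"
      using consistent_subset_cube by auto
    \<comment> \<open>x \<mapsto> x a c is an involution of C sending the violators of the query to satisfiers.\<close>
    define \<tau> where "\<tau> x = (\<lambda>k. x k * a k * c k)" for x :: "nat \<Rightarrow> int"
    have "\<tau> x \<in> ?D" if x: "x \<in> ?E" for x
    proof -
      have "x \<in> cube n" using x consistent_subset_cube by auto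
      then have "(\<Prod>i\<in>S. \<tau> x i) = b"
        using x a c parity_values[of x n S] parity_values[OF acube, of S] parity_values[OF ccube, of S]
        by (auto simp: \<tau>_def prod.distrib)
      then show ?thesis using x a c consistent_mult3 by (simp add: \<tau>_def)
    qed
    moreover have "inj_on \<tau> ?E"
    proof (rule inj_on_inverseI)
      fix x assume "x \<in> ?E"
      then have "x \<in> cube n" using consistent_subset_cube by auto
      then show "\<tau> (\<tau> x) = x"
        using cube_square[OF acube] cube_square[OF ccube] by (simp add: \<tau>_def fun_eq_iff algebra_simps)
    qed
    ultimately show ?thesis
      by (intro card_inj_on_le[of \<tau>]) (auto simp: finite_consistent)
  qed (metis card.empty le0)
  moreover have "card ?C = card ?D + card ?E"
    using finite_consistent card_Diff_subset[of ?D ?C] card_mono[of ?C ?D] by force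
  ultimately show ?thesis by simp
qed

lemma card_consistent_lower_bound:
  "consistent n p \<noteq> {} \<Longrightarrow> 2 ^ n \<le> card (consistent n p) * 2 ^ length p"
proof (induction p rule: rev_induct)
  case Nil
  then show ?case by (simp add: consistent_Nil card_cube)
next
  case (snoc s p)
  obtain S b where s: "s = (S, b)" by fastforce
  then have ne: "{x \<in> consistent n p. (\<Prod>i\<in>S. x i) = b} \<noteq> {}"
    using snoc.prems by (simp add: consistent_snoc)
  then have "2 ^ n \<le> card (consistent n p) * 2 ^ length p"
    using snoc.IH by blast
  also have "\<dots> \<le> 2 * card (consistent n (p @ [s])) * 2 ^ length p"
    using card_consistent_le_double[OF ne] by (simp add: s consistent_snoc)
  finally show ?case by simp
qed

lemma consistent_append_subset: "consistent n (p @ q) \<subseteq> consistent n p"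
  unfolding consistent_def by (auto simp: case_prod_beta)

lemma fixed_append: "fixed n p f \<Longrightarrow> fixed n (p @ q) f"
  using consistent_append_subset unfolding fixed_def by blast

lemma fixed_cong: "(\<And>x. x \<in> consistent n p \<Longrightarrow> f x = g x) \<Longrightarrow> fixed n p f = fixed n p g"
  unfolding fixed_def by auto

lemma fixed_mult: "fixed n p f \<Longrightarrow> fixed n p g \<Longrightarrow> fixed n p (\<lambda>x. f x * g x)"
  unfolding fixed_def by metis

lemma fixed_queried_coord: "fixed n (p @ [({i}, b)]) (\<lambda>x. x i)"
  by (simp add: fixed_def consistent_snoc)

definition fixed_coords :: "nat \<Rightarrow> (nat set \<times> int) list \<Rightarrow> nat set" where
  "fixed_coords n p = {i. i < n \<and> fixed n p (\<lambda>x. x i)}"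

definition potential :: "nat \<Rightarrow> (nat set \<times> int) list \<Rightarrow> nat" where
  "potential n p = card (consistent n p) * 2 ^ card (fixed_coords n p)"

lemma potential_le: "potential n p \<le> 2 ^ n"
proof (cases "consistent n p = {}")
  case False
  then obtain a where a: "a \<in> consistent n p" by blast
  then have acube: "a \<in> cube n" using consistent_subset_cube by blast
  let ?F = "fixed_coords n p"
  have F: "?F \<subseteq> {..<n}" by (auto simp: fixed_coords_def)
  have "consistent n p \<subseteq> {x \<in> cube n. \<forall>k\<in>?F. x k = a k}"
  proof (intro subsetI CollectI conjI ballI)
    fix x k assume x: "x \<in> consistent n p" and "k \<in> ?F"
    then have "fixed n p (\<lambda>x. x k)" by (simp add: fixed_coords_def)
    with x a show "x k = a k" unfolding fixed_def by blast
  qed (use consistent_subset_cube in blast)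
  then have "card (consistent n p) \<le> card {x \<in> cube n. \<forall>k\<in>?F. x k = a k}"
    by (intro card_mono) (auto intro: finite_subset[OF _ finite_cube])
  also have "\<dots> = 2 ^ (n - card ?F)"
    by (rule card_cube_agreeing[OF acube F])
  finally have "potential n p \<le> 2 ^ (n - card ?F) * 2 ^ card ?F"
    unfolding potential_def by (rule mult_le_mono1)
  moreover have "card ?F \<le> n"
    using card_mono[OF finite_lessThan F] by simp
  ultimately show ?thesis
    by (simp add: power_add[symmetric])
qed (simp add: potential_def)

definition uncorrelated :: "nat \<Rightarrow> (nat set \<times> int) list \<Rightarrow> bool" where
  "uncorrelated n p \<longleftrightarrow> (\<forall>i<n. \<forall>j<n. i \<noteq> j \<longrightarrow> fixed n p (\<lambda>x. x i * x j) \<longrightarrow>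
      fixed n p (\<lambda>x. x i) \<and> fixed n p (\<lambda>x. x j))"

lemma correlation_free_iff: "correlation_free n T \<longleftrightarrow> (\<forall>p\<in>leaf_paths T. uncorrelated n p)"
  by (simp add: correlation_free_def uncorrelated_def)

lemma uncorrelated_if_inconsistent: "consistent n p = {} \<Longrightarrow> uncorrelated n p"
  by (simp add: uncorrelated_def fixed_def)

lemma correlated_pair:
  assumes "\<not> uncorrelated n p"
  obtains i j where "i < n" "j < n" "i \<noteq> j" "fixed n p (\<lambda>x. x i * x j)" "\<not> fixed n p (\<lambda>x. x i)"
proof -
  obtain i j where ij: "i < n" "j < n" "i \<noteq> j" "fixed n p (\<lambda>x. x i * x j)"
      "\<not> fixed n p (\<lambda>x. x i) \<or> \<not> fixed n p (\<lambda>x. x j)"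
    using assms unfolding uncorrelated_def by blast
  moreover have "fixed n p (\<lambda>x. x j * x i)"
    using ij(4) by (simp add: mult.commute)
  ultimately show ?thesis using that by blast
qed

lemma potential_doubles:
  assumes "\<not> uncorrelated n p"
  obtains i where "i < n"
    "\<And>b. consistent n (p @ [({i}, b)]) \<noteq> {} \<Longrightarrow> 2 * potential n p \<le> potential n (p @ [({i}, b)])"
proof -
  obtain i j where ij: "i < n" "j < n" "i \<noteq> j" and fij: "fixed n p (\<lambda>x. x i * x j)"
    and nfi: "\<not> fixed n p (\<lambda>x. x i)"
    using assms by (rule correlated_pair)
  have i_via_j: "fixed n p' (\<lambda>x. x i) = fixed n p' (\<lambda>x. x j * (x i * x j))"
    and j_via_i: "fixed n p' (\<lambda>x. x j) = fixed n p' (\<lambda>x. x i * (x i * x j))" for p'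
    by (intro fixed_cong; use consistent_subset_cube cube_square in \<open>force simp: algebra_simps\<close>)+
  have "2 * potential n p \<le> potential n (p @ [({i}, b)])"
    if ne: "consistent n (p @ [({i}, b)]) \<noteq> {}" for b
  proof -
    let ?q = "p @ [({i}, b)]"
    have "j \<notin> fixed_coords n p"
      using nfi fij i_via_j fixed_mult by (auto simp: fixed_coords_def)
    moreover have "i \<notin> fixed_coords n p"
      using nfi by (simp add: fixed_coords_def)
    moreover have "insert i (insert j (fixed_coords n p)) \<subseteq> fixed_coords n ?q"
      using ij fixed_queried_coord fixed_append[OF fij] j_via_i fixed_mult
      by (auto simp: fixed_coords_def fixed_append)
    moreover have "finite (fixed_coords n p')" for p'
      by (rule finite_subset[of _ "{..<n}"]) (auto simp: fixed_coords_def)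
    ultimately have fixed_grows: "card (fixed_coords n p) + 2 \<le> card (fixed_coords n ?q)"
      using ij(3) card_mono[of "fixed_coords n ?q" "insert i (insert j (fixed_coords n p))"] by simp
    have halves: "card (consistent n p) \<le> 2 * card (consistent n ?q)"
      using card_consistent_le_double[of n p "{i}" b] ne by (simp add: consistent_snoc)
    have "2 * potential n p \<le> 4 * card (consistent n ?q) * 2 ^ card (fixed_coords n p)"
      using halves by (simp add: potential_def)
    also have "\<dots> = card (consistent n ?q) * 2 ^ (card (fixed_coords n p) + 2)"
      by (simp add: power_add)
    also have "\<dots> \<le> potential n ?q"
      unfolding potential_def using fixed_grows by (intro mult_le_mono2 power_increasing) auto
    finally show ?thesis .
  qed
  with ij(1) show ?thesis by (rule that)
qed

lemma uncorrelated_extension: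
  assumes "consistent n p \<noteq> {} \<Longrightarrow> 2 ^ n \<le> potential n p * 2 ^ k"
  shows "\<exists>t. valid_pdt n t \<and> depth t \<le> k \<and> (\<forall>q\<in>leaf_paths t. uncorrelated n (p @ q))"
  using assms
proof (induction k arbitrary: p)
  case (0 p)
  have "uncorrelated n p"
  proof (rule ccontr)
    assume correlated: "\<not> uncorrelated n p"
    then obtain x where x: "x \<in> consistent n p"
      using uncorrelated_if_inconsistent by blast
    obtain i where doubles:
      "\<And>b. consistent n (p @ [({i}, b)]) \<noteq> {} \<Longrightarrow> 2 * potential n p \<le> potential n (p @ [({i}, b)])"
      using potential_doubles[OF correlated] by blast
    have "x \<in> consistent n (p @ [({i}, x i)])"
      using x by (simp add: consistent_snoc)
    then have "2 * potential n p \<le> potential n (p @ [({i}, x i)])"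
      using doubles by blast
    also have "\<dots> \<le> 2 ^ n" by (rule potential_le)
    also have "\<dots> \<le> potential n p" using "0.prems" x by auto
    finally have "potential n p = 0" by simp
    then show False using "0.prems" x by auto
  qed
  then show ?case by (intro exI[of _ Leaf]) simp
next
  case (Suc k p)
  show ?case
  proof (cases "uncorrelated n p")
    case True
    then show ?thesis by (intro exI[of _ Leaf]) simp
  next
    case False
    then obtain i where i: "i < n" and doubles:
      "\<And>b. consistent n (p @ [({i}, b)]) \<noteq> {} \<Longrightarrow> 2 * potential n p \<le> potential n (p @ [({i}, b)])"
      using potential_doubles[OF False] by blast
    have "\<exists>t. valid_pdt n t \<and> depth t \<le> k \<and> (\<forall>q\<in>leaf_paths t. uncorrelated n ((p @ [({i}, b)]) @ q))"
      for b
    proof (rule Suc.IH)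
      assume ne: "consistent n (p @ [({i}, b)]) \<noteq> {}"
      then have "consistent n p \<noteq> {}" using consistent_append_subset by blast
      then have "2 ^ n \<le> 2 * potential n p * 2 ^ k" using Suc.prems by (simp add: ac_simps)
      also have "\<dots> \<le> potential n (p @ [({i}, b)]) * 2 ^ k" using doubles[OF ne] by simp
      finally show "2 ^ n \<le> potential n (p @ [({i}, b)]) * 2 ^ k" .
    qed
    then obtain t_neg t_pos where "valid_pdt n t_neg" "depth t_neg \<le> k"
        "\<forall>q\<in>leaf_paths t_neg. uncorrelated n ((p @ [({i}, -1)]) @ q)"
      and "valid_pdt n t_pos" "depth t_pos \<le> k"
        "\<forall>q\<in>leaf_paths t_pos. uncorrelated n ((p @ [({i}, 1)]) @ q)"
      by meson
    with i show ?thesis by (intro exI[of _ "Node {i} t_neg t_pos"]) auto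
  qed
qed

lemma refinement_by_grafting:
  assumes "valid_pdt n T"
    and "\<forall>q\<in>leaf_paths T. \<exists>t. valid_pdt n t \<and> depth t \<le> D \<and> (\<forall>r\<in>leaf_paths t. P (q @ r))"
  shows "\<exists>T'. valid_pdt n T' \<and> refines T T' \<and> depth T' \<le> depth T + D \<and> (\<forall>q\<in>leaf_paths T'. P q)"
  using assms
proof (induction T arbitrary: P)
  case Leaf
  then show ?case by auto
next
  case (Node S l r)
  from Node.prems(2) have
    extends_l: "\<forall>q\<in>leaf_paths l. \<exists>t. valid_pdt n t \<and> depth t \<le> D \<and> (\<forall>r\<in>leaf_paths t. P ((S, -1) # q @ r))"
    and extends_r: "\<forall>q\<in>leaf_paths r. \<exists>t. valid_pdt n t \<and> depth t \<le> D \<and> (\<forall>r\<in>leaf_paths t. P ((S, 1) # q @ r))"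
    by (simp_all add: ball_Un)
  obtain l' where "valid_pdt n l'" "refines l l'" "depth l' \<le> depth l + D"
      "\<forall>q\<in>leaf_paths l'. P ((S, -1) # q)"
    using Node.IH(1)[of "\<lambda>q. P ((S, -1) # q)"] Node.prems(1) extends_l by auto
  moreover obtain r' where "valid_pdt n r'" "refines r r'" "depth r' \<le> depth r + D"
      "\<forall>q\<in>leaf_paths r'. P ((S, 1) # q)"
    using Node.IH(2)[of "\<lambda>q. P ((S, 1) # q)"] Node.prems(1) extends_r by auto
  ultimately show ?case
    using Node.prems(1) by (intro exI[of _ "Node S l' r'"]) auto
qed

lemma length_leaf_path_le_depth: "q \<in> leaf_paths T \<Longrightarrow> length q \<le> depth T"
  by (induction T arbitrary: q) (auto simp: le_max_iff_disj)

theorem proposition2: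
  fixes n d :: nat and T :: pdt
  assumes "valid_pdt n T" and "depth T = d"
  shows "\<exists>T'. valid_pdt n T' \<and> refines T T' \<and> correlation_free n T' \<and> depth T' \<le> 2 * d"
proof -
  have "\<exists>t. valid_pdt n t \<and> depth t \<le> d \<and> (\<forall>r\<in>leaf_paths t. uncorrelated n (q @ r))"
    if q: "q \<in> leaf_paths T" for q
  proof (rule uncorrelated_extension)
    assume "consistent n q \<noteq> {}"
    then have "2 ^ n \<le> card (consistent n q) * 2 ^ length q"
      by (rule card_consistent_lower_bound)
    also have "\<dots> \<le> potential n q * 2 ^ d"
      using length_leaf_path_le_depth[OF q] assms(2)
      by (intro mult_le_mono) (auto simp: potential_def)
    finally show "2 ^ n \<le> potential n q * 2 ^ d" .
  qed
  then obtain T' where "valid_pdt n T'" "refines T T'" "depth T' \<le> d + d"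
      "\<forall>q\<in>leaf_paths T'. uncorrelated n q"
    using refinement_by_grafting[OF assms(1), of d "uncorrelated n"] assms(2) by auto
  then show ?thesis by (auto simp: correlation_free_iff)
qed

end
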